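(* Let $d\ge2$ and $a\in(0,2)$. For any $p\in\big(1,\frac{d}{d-a}\big]$ there is a constant $C_{p,d,a}>0$ such that for every $u\in\mathcal P(\mathbb R^d)$, $$\|u\|_{L^p(\mathbb R^d)}\le C_{p,d,a}\,I_a(u)^{1-\frac da\left(\frac1p-\frac{d-a}{d}\right)}.$$
   Context: With $\Phi(x,y)=(x-y)(\ln x-\ln y)$, the fractional Fisher information of a probability density $u$ on $\mathbb R^d$ is $I_a(u)=\frac12\int_{\mathbb R^d\times\mathbb R^d}\frac{\Phi(u(x),u(y))}{|x-y|^{d+a}}dxdy$. *)

theory Defs
  imports "HOL-Analysis.Analysis"
begin

text \<open>Phi(s,t) = (s - t)(ln s - ln t) on [0,oo)^2, extended-valued:
  Phi(s,s) = 0 (in particular Phi(0,0) = 0), and Phi(0,t) = Phi(t,0) = +oo for t > 0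
  (the limit value).\<close>
definition Phi :: "real \<Rightarrow> real \<Rightarrow> ennreal" where
  "Phi s t = (if s = t then 0
              else if s \<le> 0 \<or> t \<le> 0 then \<infinity>
              else ennreal ((s - t) * (ln s - ln t)))"

definition frac_fisher :: "real \<Rightarrow> ('a::euclidean_space \<Rightarrow> real) \<Rightarrow> ennreal" where
  "frac_fisher a u = ennreal (1/2) *
     (\<integral>\<^sup>+ z. Phi (u (fst z)) (u (snd z)) /
               ennreal (norm (fst z - snd z) powr (real DIM('a) + a)) \<partial>(lborel \<Otimes>\<^sub>M lborel))"

definition prob_density :: "('a::euclidean_space \<Rightarrow> real) \<Rightarrow> bool" where
  "prob_density u \<longleftrightarrow> u \<in> borel_measurable lborel \<and> (\<forall>x. 0 \<le> u x)
      \<and> (\<integral>\<^sup>+ x. ennreal (u x) \<partial>lborel) = 1"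

definition Lp_pow :: "real \<Rightarrow> ('a::euclidean_space \<Rightarrow> real) \<Rightarrow> ennreal" where
  "Lp_pow p u = (\<integral>\<^sup>+ x. ennreal (\<bar>u x\<bar> powr p) \<partial>lborel)"

end

theory Submission
  imports Defs
begin

text \<open>Layer-cake argument on the dyadic superlevel sets \<open>A\<^sub>k = {u \<ge> \<lambda> 4\<^sup>k}\<close>.
  When \<open>u x \<ge> 4 u y\<close> one has \<open>\<Phi>(u x, u y) \<ge> u x / 3\<close>, so the pairs in
  \<open>A\<^sub>k\<^sub>+\<^sub>1 \<times> (\<real>\<^sup>d - A\<^sub>k)\<close> contribute \<open>\<lambda> 4\<^sup>k |x - y|\<^sup>-\<^sup>d\<^sup>-\<^sup>a\<close> to the
  Fisher information. Comparing \<open>A\<^sub>k\<close> with a ball of the same volume gives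
  \<open>\<integral>\<^bsub>\<real>\<^sup>d - A\<^sub>k\<^esub> |x - y|\<^sup>-\<^sup>d\<^sup>-\<^sup>a dy \<ge> c |A\<^sub>k|\<^sup>-\<^sup>a\<^sup>/\<^sup>d\<close>, hence
  \<open>\<Sum>\<^sub>k \<lambda> 4\<^sup>k |A\<^sub>k\<^sub>+\<^sub>1| |A\<^sub>k|\<^sup>-\<^sup>a\<^sup>/\<^sup>d \<le> 2 I\<^sub>a(u) / c\<close>. A discrete absorption argument,
  started from Chebyshev's bound \<open>|A\<^sub>0| \<le> 1/\<lambda>\<close>, turns this into a bound on
  \<open>\<Sum>\<^sub>k \<lambda> 4\<^sup>k |A\<^sub>k|\<^sup>1\<^sup>-\<^sup>a\<^sup>/\<^sup>d\<close>, and since \<open>p \<le> d/(d-a)\<close> this controls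
  \<open>\<integral> u\<^sup>p \<le> \<lambda>\<^sup>p\<^sup>-\<^sup>1 + \<Sum>\<^sub>k (4 \<lambda> 4\<^sup>k)\<^sup>p |A\<^sub>k|\<close>. Choosing \<open>\<lambda> = I\<^sub>a(u)\<^sup>d\<^sup>/\<^sup>a\<close> balances
  the terms.\<close>

section \<open>Discrete estimates\<close>

definition absorption_const :: "real \<Rightarrow> real" where
  "absorption_const r = 4 * ((1/8) powr (1/(1-r))) powr (-r)"

lemma absorption_const_pos: "absorption_const r > 0"
  unfolding absorption_const_def by simp

lemma powr_one_minus_le_absorb:
  fixes r l x y :: real
  assumes r: "0 < r" "r < 1" and l: "l > 0" and xy: "0 \<le> y" "y \<le> x"
  shows "4 * l * y powr (1-r) \<le> l * x powr (1-r) / 2 + absorption_const r * (l * y * x powr (-r))"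
proof -
  define t0 where "t0 = (1/8::real) powr (1/(1-r))"
  have t0_pos: "t0 > 0" unfolding t0_def by simp
  have t0_powr: "t0 powr (1-r) = 1/8" unfolding t0_def using r by (simp add: powr_powr)
  show ?thesis
  proof (cases "y \<le> t0 * x")
    case True
    have "y powr (1-r) \<le> (t0 * x) powr (1-r)" using xy r True by (intro powr_mono2) auto
    also have "\<dots> = x powr (1-r) / 8" using t0_pos xy by (simp add: powr_mult t0_powr)
    finally have "4 * l * y powr (1-r) \<le> 4 * l * (x powr (1-r) / 8)"
      using l by (intro mult_left_mono) auto
    moreover have "0 \<le> absorption_const r * (l * y * x powr (-r))"
      using absorption_const_pos[of r] l xy by simp
    ultimately show ?thesis by simp
  next
    case False
    moreover have "t0 * x \<ge> 0" using t0_pos xy by simp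
    ultimately have y: "y > 0" by simp
    have x: "x > 0" using y xy by simp
    have "y powr (1-r) = y * y powr (-r)" using y by (simp add: powr_diff powr_minus field_simps)
    also have "\<dots> \<le> y * (t0 * x) powr (-r)"
      using y x t0_pos r False by (intro mult_left_mono powr_mono2') auto
    also have "(t0 * x) powr (-r) = t0 powr (-r) * x powr (-r)" using t0_pos x by (simp add: powr_mult)
    finally have "4 * l * y powr (1-r) \<le> 4 * l * (y * (t0 powr (-r) * x powr (-r)))"
      using l by (intro mult_left_mono) auto
    also have "\<dots> = absorption_const r * (l * y * x powr (-r))"
      unfolding absorption_const_def t0_def by (simp only: mult_ac)
    finally show ?thesis using l x by (smt (verit) divide_nonneg_pos powr_ge_zero mult_nonneg_nonneg)
  qed
qed

text \<open>Each term of the sum on the left is absorbed, via the previous lemma, into half of the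
  preceding term plus a term of the known sum \<open>B\<close>.\<close>

lemma sum_dyadic_powr_le:
  fixes r l B :: real and m :: "nat \<Rightarrow> real"
  assumes r: "0 < r" "r < 1" and l: "l > 0"
    and m_nonneg: "\<And>k. 0 \<le> m k" and m_decr: "\<And>k. m (Suc k) \<le> m k" and m0: "m 0 \<le> 1/l"
    and B: "\<And>n. (\<Sum>k<n. l * 4^k * m (Suc k) * m k powr (-r)) \<le> B"
  shows "(\<Sum>k<n. l * 4^k * m k powr (1-r)) \<le> 2 * l powr r + 2 * absorption_const r * B"
proof -
  define y where "y k = l * 4^k * m k powr (1-r)" for k
  define b where "b k = l * 4^k * m (Suc k) * m k powr (-r)" for k
  have step: "y (Suc k) \<le> y k / 2 + absorption_const r * b k" for k
    using powr_one_minus_le_absorb[OF r, of "l * 4^k" "m (Suc k)" "m k"] l m_nonneg m_decr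
    unfolding y_def b_def by (simp add: algebra_simps)
  have y_nonneg: "y k \<ge> 0" for k unfolding y_def using l by simp
  have y0: "y 0 \<le> l powr r"
  proof -
    have "y 0 \<le> l * (1/l) powr (1-r)"
      unfolding y_def using m_nonneg m0 r l by (simp add: mult_left_mono powr_mono2)
    also have "\<dots> = l powr r" using l by (simp add: powr_divide powr_diff field_simps)
    finally show ?thesis .
  qed
  have B_nonneg: "0 \<le> B" using B[of 0] by simp
  have "(\<Sum>k<Suc n. y k) \<le> 2 * l powr r + 2 * absorption_const r * B" for n
  proof -
    have "(\<Sum>k<Suc n. y k) = y 0 + (\<Sum>k<n. y (Suc k))" by (rule sum.lessThan_Suc_shift)
    also have "\<dots> \<le> y 0 + (\<Sum>k<n. y k / 2 + absorption_const r * b k)"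
      by (intro add_left_mono sum_mono step)
    also have "\<dots> = y 0 + (\<Sum>k<n. y k) / 2 + absorption_const r * (\<Sum>k<n. b k)"
      by (simp add: sum.distrib sum_divide_distrib sum_distrib_left)
    also have "\<dots> \<le> y 0 + (\<Sum>k<Suc n. y k) / 2 + absorption_const r * B"
      using B[of n] absorption_const_pos[of r] y_nonneg unfolding b_def
      by (intro add_mono mult_left_mono divide_right_mono) auto
    finally show ?thesis using y0 by linarith
  qed
  then show ?thesis
    using B_nonneg l absorption_const_pos[of r] unfolding y_def
    by (cases n) (auto intro: add_nonneg_nonneg)
qed

text \<open>With \<open>q (1 - r) = 1\<close>, the terms \<open>\<lambda>\<^sub>k m\<^sub>k\<^sup>1\<^sup>-\<^sup>r\<close> are \<open>(\<lambda>\<^sub>k\<^sup>q m\<^sub>k)\<^sup>1\<^sup>/\<^sup>q\<close>; the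
  \<open>\<ell>\<^sup>1\<close>-bound \<open>S\<close> controls their \<open>\<ell>\<^sup>q\<close>-norm, and the surplus \<open>\<lambda>\<^sub>k\<^sup>p\<^sup>-\<^sup>q \<le> l\<^sup>p\<^sup>-\<^sup>q\<close>
  comes from \<open>p \<le> q\<close>.\<close>

lemma sum_dyadic_moments_le:
  fixes r q p l S :: real and m :: "nat \<Rightarrow> real"
  assumes q: "q * (1-r) = 1" and p: "1 \<le> p" "p \<le> q" and l: "l > 0"
    and m_nonneg: "\<And>k. 0 \<le> m k" and S: "\<And>n. (\<Sum>k<n. l * 4^k * m k powr (1-r)) \<le> S"
  shows "(\<Sum>k<n. 4 powr p * (l * 4^k) powr p * m k) \<le> 4 powr p * l powr (p-q) * S powr q"
proof -
  define y where "y k = l * 4^k * m k powr (1-r)" for k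
  have y_nonneg: "y k \<ge> 0" for k unfolding y_def using l by simp
  have S_nonneg: "S \<ge> 0" using S[of 0] by simp
  have y_le: "y k \<le> S" for k
  proof -
    have "y k \<le> (\<Sum>j<Suc k. y j)" using y_nonneg by (intro member_le_sum) auto
    then show ?thesis using S[of "Suc k"] unfolding y_def by simp
  qed
  have term_le: "(l * 4^k) powr p * m k \<le> l powr (p-q) * (y k * S powr (q-1))" for k
  proof -
    have lk: "l \<le> l * 4^k" "l * 4^k > 0" using l by auto
    have "y k powr q = (l * 4^k) powr q * (m k powr (1-r)) powr q"
      unfolding y_def using lk m_nonneg by (simp add: powr_mult)
    also have "(m k powr (1-r)) powr q = m k" using m_nonneg q by (simp add: powr_powr mult.commute)
    finally have yq: "y k powr q = (l * 4^k) powr q * m k" .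
    have "y k powr q \<le> y k * S powr (q-1)"
    proof (cases "y k = 0")
      case False
      then have "y k > 0" using y_nonneg[of k] by simp
      then have "y k powr q = y k * y k powr (q-1)" by (simp add: powr_diff)
      also have "\<dots> \<le> y k * S powr (q-1)"
        using \<open>y k > 0\<close> y_le[of k] p by (intro mult_left_mono powr_mono2) auto
      finally show ?thesis .
    qed simp
    moreover have "(l * 4^k) powr (p-q) \<le> l powr (p-q)" using lk p l by (intro powr_mono2') auto
    moreover have "(l * 4^k) powr p * m k = (l * 4^k) powr (p-q) * y k powr q"
      unfolding yq by (simp add: mult.assoc flip: powr_add)
    ultimately show ?thesis using m_nonneg[of k] by (simp add: mult_mono)
  qed
  have "(\<Sum>k<n. 4 powr p * (l * 4^k) powr p * m k)
      \<le> (\<Sum>k<n. 4 powr p * (l powr (p-q) * (y k * S powr (q-1))))"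
    by (intro sum_mono) (simp add: term_le mult.assoc)
  also have "\<dots> = 4 powr p * l powr (p-q) * S powr (q-1) * (\<Sum>k<n. y k)"
    by (simp add: sum_distrib_left sum_distrib_right mult_ac)
  also have "\<dots> \<le> 4 powr p * l powr (p-q) * S powr (q-1) * S"
    using S[of n] unfolding y_def by (intro mult_left_mono) auto
  also have "\<dots> = 4 powr p * l powr (p-q) * S powr q"
    using S_nonneg by (cases "S = 0") (auto simp: mult.assoc powr_diff)
  finally show ?thesis .
qed

lemma sum_dyadic_crossings_le:
  fixes l v :: real
  assumes "l > 0" "v \<ge> 0"
  shows "(\<Sum>k<n. l * 4^k * (if l * 4^(Suc k) \<le> v \<and> P k then 1 else 0)) \<le> min v (l * 4^n) / 3"
proof (induction n)
  case (Suc n)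
  show ?case
  proof (cases "l * 4^(Suc n) \<le> v \<and> P n")
    case True
    then have "min v (l * 4^Suc n) = l * 4^Suc n" "min v (l * 4^n) = l * 4^n" using assms by auto
    with Suc.IH True show ?thesis by simp
  next
    case False
    have "min v (l * 4^n) \<le> min v (l * 4^Suc n)" using assms by (intro min.mono) auto
    with Suc.IH show ?thesis
      by (simp only: sum.lessThan_Suc False if_False mult_zero_right add_0_right)
  qed
qed (use assms in simp)

lemma Phi_ge_third:
  fixes v w :: real
  assumes "0 \<le> w" "4 * w < v"
  shows "ennreal (v / 3) \<le> Phi v w"
proof (cases "w = 0")
  case False
  then have w: "w > 0" and v: "v > 0" "v \<noteq> w" using assms by auto
  have "ln (w/v) \<le> w/v - 1" using w v by (intro ln_le_minus_one) auto
  then have "ln v - ln w \<ge> 1 - w/v" using w v by (simp add: ln_div)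
  moreover have "w/v \<le> 1/4" using assms v by (simp add: field_simps)
  ultimately have "ln v - ln w \<ge> 3/4" by linarith
  then have "(v - w) * (3/4) \<le> (v - w) * (ln v - ln w)"
    using assms by (intro mult_left_mono) auto
  moreover have "v/3 \<le> (v - w) * (3/4)" using assms by simp
  ultimately have "v/3 \<le> (v - w) * (ln v - ln w)" by linarith
  then show ?thesis using v w by (simp add: Phi_def ennreal_leI)
qed (use assms in \<open>simp add: Phi_def\<close>)

text \<open>At most one geometric run of indices \<open>k\<close> has \<open>w < \<lambda>4\<^sup>k \<le> \<lambda>4\<^sup>k\<^sup>+\<^sup>1 \<le> v\<close>, and
  its total weight is at most \<open>v/3\<close>.\<close>

lemma suminf_dyadic_crossings_le_Phi:
  fixes v w l :: real
  assumes "0 \<le> v" "0 \<le> w" "l > 0"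
  shows "(\<Sum>k. ennreal (l * 4^k * (if l * 4^(Suc k) \<le> v \<and> w < l * 4^k then 1 else 0))) \<le> Phi v w"
proof (cases "\<exists>k. l * 4^(Suc k) \<le> v \<and> w < l * 4^k")
  case True
  then obtain k where "l * 4^(Suc k) \<le> v" "w < l * 4^k" by auto
  then have "ennreal (v/3) \<le> Phi v w" using assms by (intro Phi_ge_third) auto
  moreover have "(\<Sum>k. ennreal (l * 4^k * (if l * 4^(Suc k) \<le> v \<and> w < l * 4^k then 1 else 0)))
      \<le> ennreal (v/3)"
  proof (rule suminf_le_const[OF summableI])
    fix n
    have "(\<Sum>k<n. l * 4^k * (if l * 4^(Suc k) \<le> v \<and> w < l * 4^k then 1 else 0)) \<le> v/3"
      using sum_dyadic_crossings_le[OF assms(3,1), of "\<lambda>k. w < l * 4^k" n] by simp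
    then show "(\<Sum>k<n. ennreal (l * 4^k * (if l * 4^(Suc k) \<le> v \<and> w < l * 4^k then 1 else 0)))
        \<le> ennreal (v/3)"
      using assms by (subst sum_ennreal) (auto intro: ennreal_leI)
  qed
  ultimately show ?thesis by simp
next
  case False
  then have "\<And>k. (if l * 4^(Suc k) \<le> v \<and> w < l * 4^k then 1 else 0) = (0::real)" by auto
  then show ?thesis by simp
qed

section \<open>The kernel outside a set of given volume\<close>

definition dist_kernel :: "real \<Rightarrow> 'a::euclidean_space \<Rightarrow> 'a \<Rightarrow> ennreal" where
  "dist_kernel s x y = 1 / ennreal (norm (x - y) powr s)"

lemma dist_kernel_measurable [measurable]:
  "(\<lambda>y. dist_kernel s x y) \<in> borel_measurable lborel"
  "(\<lambda>z. dist_kernel s (fst z) (snd z)) \<in> borel_measurable (lborel \<Otimes>\<^sub>M lborel)"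
  unfolding dist_kernel_def by measurable

lemma indicator_times_dist_kernel_measurable:
  assumes "A \<in> sets lborel" "B \<in> sets lborel"
  shows "(\<lambda>z. indicator (A \<times> B) z * dist_kernel s (fst z) (snd z)) \<in> borel_measurable (lborel \<Otimes>\<^sub>M lborel)"
proof -
  have [measurable]: "A \<times> B \<in> sets (lborel \<Otimes>\<^sub>M lborel)" using assms by (intro pair_measureI) auto
  show ?thesis by measurable
qed

lemma dist_kernel_eq:
  assumes "x \<noteq> y"
  shows "dist_kernel s x y = ennreal (1 / norm (x - y) powr s)"
  unfolding dist_kernel_def using assms by (subst divide_ennreal[symmetric]) auto

lemma dist_kernel_ge:
  assumes "norm (x - y) \<le> t" "t > 0" "s > 0"
  shows "ennreal (1 / t powr s) \<le> dist_kernel s x y"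
proof (cases "x = y")
  case True then show ?thesis by (simp add: dist_kernel_def divide_ennreal_def)
next
  case False
  then show ?thesis using assms
    by (auto simp: dist_kernel_eq intro!: ennreal_leI divide_left_mono powr_mono2)
qed

lemma dist_kernel_le:
  assumes "norm (x - y) \<ge> t" "t > 0" "s > 0"
  shows "dist_kernel s x y \<le> ennreal (1 / t powr s)"
proof -
  have "x \<noteq> y" using assms by auto
  then show ?thesis using assms
    by (auto simp: dist_kernel_eq intro!: ennreal_leI divide_left_mono powr_mono2)
qed

lemma emeasure_Diff_le_swap:
  assumes "A \<in> sets M" "B \<in> sets M" "emeasure M A \<noteq> \<infinity>" "emeasure M B \<noteq> \<infinity>"
    and "measure M A \<le> measure M B"
  shows "emeasure M (A - B) \<le> emeasure M (B - A)"
proof -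
  have "measure M (A - B) = measure M A - measure M (A \<inter> B)"
    using assms measure_Diff[of M A "A \<inter> B"] by (simp add: Diff_Int)
  moreover have "measure M (B - A) = measure M B - measure M (A \<inter> B)"
    using assms measure_Diff[of M B "A \<inter> B"] by (simp add: Diff_Int Int_commute)
  moreover have "emeasure M (A - B) \<noteq> \<infinity>"
    using assms emeasure_mono[of "A - B" A M] by (auto simp: top_unique)
  moreover have "emeasure M (B - A) \<noteq> \<infinity>"
    using assms emeasure_mono[of "B - A" B M] by (auto simp: top_unique)
  ultimately show ?thesis
    using assms(5) by (simp add: emeasure_eq_ennreal_measure ennreal_leI)
qed

text \<open>Bathtub principle: the kernel is larger on the ball than outside it, so trading the
  part of \<open>-E\<close> outside the ball for the (larger) part of the ball outside \<open>E\<close> can only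
  decrease the integral.\<close>

lemma nn_integral_compl_ball_le_compl:
  fixes x :: "'a::euclidean_space"
  assumes E: "E \<in> sets lborel" "emeasure lborel E < \<infinity>" and \<rho>: "\<rho> > 0" and s: "s > 0"
    and mE: "measure lborel E \<le> measure lborel (cball x \<rho>)"
  shows "(\<integral>\<^sup>+y. indicator (- cball x \<rho>) y * dist_kernel s x y \<partial>lborel)
     \<le> (\<integral>\<^sup>+y. indicator (- E) y * dist_kernel s x y \<partial>lborel)"
proof -
  define B where "B = cball x \<rho>"
  define K where "K = ennreal (1 / \<rho> powr s)"
  have [measurable]: "B \<in> sets lborel" "E \<in> sets lborel"
    and [simp]: "B \<in> sets borel" "E \<in> sets borel" unfolding B_def using E by auto
  have finB: "emeasure lborel B \<noteq> \<infinity>" unfolding B_def using emeasure_bounded_finite[of "cball x \<rho>"] by auto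
  have "emeasure lborel (E - B) \<le> emeasure lborel (B - E)"
    using E finB mE unfolding B_def by (intro emeasure_Diff_le_swap) auto
  moreover have "(\<integral>\<^sup>+y. indicator (E - B) y * dist_kernel s x y \<partial>lborel) \<le> K * emeasure lborel (E - B)"
  proof -
    have "(\<integral>\<^sup>+y. indicator (E - B) y * dist_kernel s x y \<partial>lborel)
        \<le> (\<integral>\<^sup>+y. K * indicator (E - B) y \<partial>lborel)"
      unfolding K_def
      by (intro nn_integral_mono) (auto simp: B_def dist_norm split: split_indicator intro!: dist_kernel_le \<rho> s)
    then show ?thesis by (subst (asm) nn_integral_cmult_indicator) auto
  qed
  moreover have "K * emeasure lborel (B - E) \<le> (\<integral>\<^sup>+y. indicator (B - E) y * dist_kernel s x y \<partial>lborel)"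
  proof -
    have "(\<integral>\<^sup>+y. K * indicator (B - E) y \<partial>lborel)
        \<le> (\<integral>\<^sup>+y. indicator (B - E) y * dist_kernel s x y \<partial>lborel)"
      unfolding K_def
      by (intro nn_integral_mono) (auto simp: B_def dist_norm split: split_indicator intro!: dist_kernel_ge \<rho> s)
    then show ?thesis by (subst (asm) nn_integral_cmult_indicator) auto
  qed
  ultimately have trade: "(\<integral>\<^sup>+y. indicator (E - B) y * dist_kernel s x y \<partial>lborel)
      \<le> (\<integral>\<^sup>+y. indicator (B - E) y * dist_kernel s x y \<partial>lborel)"
    by (meson mult_left_mono order_trans zero_le)
  have split_B: "(\<integral>\<^sup>+y. indicator (- B) y * dist_kernel s x y \<partial>lborel) =
      (\<integral>\<^sup>+y. indicator (E - B) y * dist_kernel s x y \<partial>lborel)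
      + (\<integral>\<^sup>+y. indicator (- E - B) y * dist_kernel s x y \<partial>lborel)"
    by (subst nn_integral_add[symmetric]) (auto intro!: nn_integral_cong split: split_indicator)
  have split_E: "(\<integral>\<^sup>+y. indicator (- E) y * dist_kernel s x y \<partial>lborel) =
      (\<integral>\<^sup>+y. indicator (B - E) y * dist_kernel s x y \<partial>lborel)
      + (\<integral>\<^sup>+y. indicator (- E - B) y * dist_kernel s x y \<partial>lborel)"
    by (subst nn_integral_add[symmetric]) (auto intro!: nn_integral_cong split: split_indicator)
  show ?thesis
    unfolding B_def[symmetric] split_B split_E using trade by (rule add_right_mono)
qed

lemma nn_integral_compl_ball_ge:
  fixes x :: "'a::euclidean_space"
  assumes \<rho>: "\<rho> > 0" and s: "s > 0"
  shows "ennreal ((2 ^ DIM('a) - 1) * unit_ball_vol (real DIM('a)) * \<rho> ^ DIM('a) * (1 / (2*\<rho>) powr s))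
     \<le> (\<integral>\<^sup>+y. indicator (- cball x \<rho>) y * dist_kernel s x y \<partial>lborel)"
proof -
  define \<omega> where "\<omega> = unit_ball_vol (real DIM('a))"
  define K where "K = ennreal (1 / (2*\<rho>) powr s)"
  have "emeasure lborel (cball x (2*\<rho>) - cball x \<rho>)
      = emeasure lborel (cball x (2*\<rho>)) - emeasure lborel (cball x \<rho>)"
    using \<rho> by (intro emeasure_Diff) (auto simp: emeasure_cball)
  also have "\<dots> = ennreal (\<omega> * (2*\<rho>) ^ DIM('a) - \<omega> * \<rho> ^ DIM('a))"
    unfolding \<omega>_def using \<rho>
    by (simp add: emeasure_cball ennreal_minus mult_left_mono power_mono)
  also have "\<omega> * (2*\<rho>) ^ DIM('a) - \<omega> * \<rho> ^ DIM('a) = (2 ^ DIM('a) - 1) * \<omega> * \<rho> ^ DIM('a)"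
    by (simp add: power_mult_distrib algebra_simps)
  finally have annulus: "emeasure lborel (cball x (2*\<rho>) - cball x \<rho>)
      = ennreal ((2 ^ DIM('a) - 1) * \<omega> * \<rho> ^ DIM('a))" .
  have "(\<integral>\<^sup>+y. K * indicator (cball x (2*\<rho>) - cball x \<rho>) y \<partial>lborel)
      \<le> (\<integral>\<^sup>+y. indicator (- cball x \<rho>) y * dist_kernel s x y \<partial>lborel)"
    unfolding K_def
    by (intro nn_integral_mono) (auto simp: dist_norm split: split_indicator intro!: dist_kernel_ge \<rho> s)
  then have "K * emeasure lborel (cball x (2*\<rho>) - cball x \<rho>)
      \<le> (\<integral>\<^sup>+y. indicator (- cball x \<rho>) y * dist_kernel s x y \<partial>lborel)"
    by (subst (asm) nn_integral_cmult_indicator) auto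
  then show ?thesis
    unfolding annulus K_def \<omega>_def using \<rho> by (simp add: ennreal_mult'[symmetric] mult.commute)
qed

definition ball_kernel_const :: "nat \<Rightarrow> real \<Rightarrow> real" where
  "ball_kernel_const d a = (2 ^ d - 1) * unit_ball_vol (real d) * (1 / 2 powr (real d + a))
     * unit_ball_vol (real d) powr (a / real d)"

lemma ball_kernel_const_pos:
  assumes "d > 0"
  shows "ball_kernel_const d a > 0"
proof -
  have "(2::real) ^ d > 1" using assms by (intro one_less_power) auto
  moreover have "unit_ball_vol (real d) \<noteq> 0" using unit_ball_vol_pos[of "real d"] by linarith
  ultimately show ?thesis unfolding ball_kernel_const_def by (intro mult_pos_pos) simp_all
qed

text \<open>Apply the two previous lemmas to the ball with \<open>|B(x,\<rho>)| = |E|\<close>.\<close>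

lemma nn_integral_compl_kernel_ge:
  fixes x :: "'a::euclidean_space" and E :: "'a set"
  assumes E: "E \<in> sets lborel" "emeasure lborel E < \<infinity>" and a: "a > 0"
  shows "ennreal (ball_kernel_const DIM('a) a * measure lborel E powr (-(a / DIM('a))))
     \<le> (\<integral>\<^sup>+y. indicator (- E) y * dist_kernel (real DIM('a) + a) x y \<partial>lborel)"
proof (cases "measure lborel E = 0")
  case False
  define d where "d = DIM('a)"
  define \<omega> where "\<omega> = unit_ball_vol (real d)"
  define m where "m = measure lborel E"
  define \<rho> where "\<rho> = (m / \<omega>) powr (1 / real d)"
  have d: "d > 0" unfolding d_def by simp
  have \<omega>: "\<omega> > 0" unfolding \<omega>_def by simp
  have m: "m > 0" using False m_def by (simp add: zero_less_measure_iff)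
  have \<rho>: "\<rho> > 0" unfolding \<rho>_def using m \<omega> by simp
  have \<rho>_pow: "\<rho> ^ d = m / \<omega>"
    unfolding \<rho>_def using m \<omega> d by (simp add: powr_powr flip: powr_realpow)
  have "measure lborel E \<le> measure lborel (cball x \<rho>)"
    using \<rho> \<rho>_pow \<omega> unfolding m_def d_def \<omega>_def by (simp add: content_cball less_imp_neq[symmetric])
  with nn_integral_compl_ball_le_compl[OF E \<rho>, of "real DIM('a) + a" x]
    nn_integral_compl_ball_ge[OF \<rho>, of "real DIM('a) + a" x] a
  have bound: "ennreal ((2 ^ d - 1) * \<omega> * \<rho> ^ d * (1 / (2*\<rho>) powr (real d + a)))
     \<le> (\<integral>\<^sup>+y. indicator (- E) y * dist_kernel (real d + a) x y \<partial>lborel)"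
    unfolding d_def \<omega>_def by (auto intro: order_trans)
  have e1: "(2*\<rho>) powr (real d + a) = 2 powr (real d + a) * (\<rho> ^ d * \<rho> powr a)"
    using \<rho> by (simp add: powr_mult powr_add powr_realpow)
  have e2: "\<rho> powr a = m powr (a / d) / \<omega> powr (a / d)"
    unfolding \<rho>_def using m \<omega> by (simp add: powr_powr powr_divide)
  have e3: "m powr (-(a/d)) = 1 / m powr (a/d)" by (simp add: powr_minus divide_inverse)
  have "(2 ^ d - 1) * \<omega> * \<rho> ^ d * (1 / (2*\<rho>) powr (real d + a))
      = ball_kernel_const d a * m powr (-(a / d))"
    unfolding ball_kernel_const_def e1 e2 e3 \<omega>_def[symmetric] using \<rho> \<omega> m \<rho>_pow
    by (simp add: field_simps)
  with bound show ?thesis unfolding d_def m_def by simp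
qed simp

section \<open>Superlevel sets and the Fisher information\<close>

lemma nn_integral_pair_compl_kernel_ge:
  fixes A B :: "'a::euclidean_space set"
  assumes A: "A \<in> sets lborel" "emeasure lborel A < \<infinity>"
    and B: "B \<in> sets lborel" "emeasure lborel B < \<infinity>" and a: "a > 0"
  shows "ennreal (ball_kernel_const DIM('a) a * measure lborel A powr (-(a / DIM('a))) * measure lborel B)
     \<le> (\<integral>\<^sup>+z. indicator (B \<times> - A) z * dist_kernel (real DIM('a) + a) (fst z) (snd z)
            \<partial>(lborel \<Otimes>\<^sub>M lborel))"
proof -
  define c where "c = ball_kernel_const DIM('a) a * measure lborel A powr (-(a / DIM('a)))"
  define K :: "'a \<Rightarrow> 'a \<Rightarrow> ennreal" where "K = dist_kernel (real DIM('a) + a)"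
  have [measurable]: "A \<in> sets lborel" "B \<in> sets lborel" using A B by auto
  have [measurable]: "(\<lambda>z. indicator (B \<times> - A) z * K (fst z) (snd z)) \<in> borel_measurable (lborel \<Otimes>\<^sub>M lborel)"
    unfolding K_def using A B by (intro indicator_times_dist_kernel_measurable) auto
  have c: "c \<ge> 0" unfolding c_def using ball_kernel_const_pos[of "DIM('a)" a] by simp
  have "ennreal c * emeasure lborel B = (\<integral>\<^sup>+x. ennreal c * indicator B x \<partial>lborel)"
    using B by (subst nn_integral_cmult_indicator) auto
  also have "\<dots> \<le> (\<integral>\<^sup>+x. indicator B x * (\<integral>\<^sup>+y. indicator (- A) y * K x y \<partial>lborel) \<partial>lborel)"
    using nn_integral_compl_kernel_ge[OF A a] unfolding c_def K_def
    by (intro nn_integral_mono) (auto split: split_indicator)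
  also have "\<dots> = (\<integral>\<^sup>+x. \<integral>\<^sup>+y. indicator (B \<times> - A) (x, y) * K x y \<partial>lborel \<partial>lborel)"
    by (intro nn_integral_cong) (auto simp: indicator_times mult.assoc nn_integral_cmult[symmetric] K_def)
  also have "\<dots> = (\<integral>\<^sup>+z. indicator (B \<times> - A) z * K (fst z) (snd z) \<partial>(lborel \<Otimes>\<^sub>M lborel))"
    by (subst lborel.nn_integral_fst[symmetric]) auto
  finally show ?thesis
    using B c unfolding c_def K_def by (simp add: emeasure_eq_ennreal_measure ennreal_mult)
qed

text \<open>Summing the previous estimate over the pairs \<open>A\<^sub>k\<^sub>+\<^sub>1 \<times> (\<real>\<^sup>d - A\<^sub>k)\<close>, with weights
  \<open>\<lambda> 4\<^sup>k\<close> dominated by \<open>\<Phi>\<close> through \<open>suminf_dyadic_crossings_le_Phi\<close>.\<close>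

lemma suminf_superlevel_energy_le:
  fixes u :: "'a::euclidean_space \<Rightarrow> real" and a l :: real
  assumes u[measurable]: "u \<in> borel_measurable lborel" and u_nonneg: "\<And>x. 0 \<le> u x"
    and l: "l > 0" and a: "a > 0"
    and fin: "\<And>k. emeasure lborel {x. l * 4^k \<le> u x} < \<infinity>"
  shows "(\<Sum>k. ennreal (l * 4^k * (ball_kernel_const DIM('a) a
              * measure lborel {x. l * 4^k \<le> u x} powr (-(a / DIM('a)))
              * measure lborel {x. l * 4^Suc k \<le> u x})))
     \<le> (\<integral>\<^sup>+ z. Phi (u (fst z)) (u (snd z)) /
               ennreal (norm (fst z - snd z) powr (real DIM('a) + a)) \<partial>(lborel \<Otimes>\<^sub>M lborel))"
proof -
  define A where "A k = {x. l * 4^k \<le> u x}" for k :: nat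
  define K :: "'a \<Rightarrow> 'a \<Rightarrow> ennreal" where "K = dist_kernel (real DIM('a) + a)"
  define T where "T k z = indicator (A (Suc k) \<times> - A k) z * K (fst z) (snd z)" for k z
  have [measurable]: "A k \<in> sets lborel" and [simp]: "A k \<in> sets borel" for k
    unfolding A_def by measurable
  have [measurable]: "T k \<in> borel_measurable (lborel \<Otimes>\<^sub>M lborel)" for k
    unfolding T_def K_def by (intro indicator_times_dist_kernel_measurable) (auto intro: borel_comp)
  have fin_A: "emeasure lborel (A k) < \<infinity>" for k unfolding A_def by (rule fin)
  have pair_bound: "ennreal (ball_kernel_const DIM('a) a * measure lborel (A k) powr (-(a / DIM('a)))
      * measure lborel (A (Suc k))) \<le> (\<integral>\<^sup>+z. T k z \<partial>(lborel \<Otimes>\<^sub>M lborel))" for k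
    unfolding T_def K_def using a fin_A by (intro nn_integral_pair_compl_kernel_ge) auto
  have T_le_Phi: "(\<Sum>k. ennreal (l * 4^k) * T k z)
      \<le> Phi (u (fst z)) (u (snd z)) / ennreal (norm (fst z - snd z) powr (real DIM('a) + a))" for z
  proof -
    obtain x y where z: "z = (x, y)" by (cases z)
    have "ennreal (l * 4^k) * T k z
        = ennreal (l * 4^k * (if l * 4^(Suc k) \<le> u x \<and> u y < l * 4^k then 1 else 0)) * K x y" for k
      unfolding T_def z A_def by (auto simp: indicator_def not_le)
    then have "(\<Sum>k. ennreal (l * 4^k) * T k z)
        = (\<Sum>k. ennreal (l * 4^k * (if l * 4^(Suc k) \<le> u x \<and> u y < l * 4^k then 1 else 0))) * K x y"
      by (simp add: ennreal_suminf_multc)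
    also have "\<dots> \<le> Phi (u x) (u y) * K x y"
      using suminf_dyadic_crossings_le_Phi[OF u_nonneg u_nonneg l] by (intro mult_right_mono) auto
    finally show ?thesis unfolding z K_def dist_kernel_def by (simp add: divide_ennreal_def)
  qed
  have "(\<Sum>k. ennreal (l * 4^k * (ball_kernel_const DIM('a) a * measure lborel (A k) powr (-(a / DIM('a)))
              * measure lborel (A (Suc k)))))
      \<le> (\<Sum>k. ennreal (l * 4^k) * (\<integral>\<^sup>+z. T k z \<partial>(lborel \<Otimes>\<^sub>M lborel)))"
    using pair_bound l by (intro suminf_le summableI) (auto simp: ennreal_mult' mult.assoc intro!: mult_left_mono)
  also have "\<dots> = (\<integral>\<^sup>+z. (\<Sum>k. ennreal (l * 4^k) * T k z) \<partial>(lborel \<Otimes>\<^sub>M lborel))"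
    by (subst nn_integral_suminf) (auto simp: nn_integral_cmult)
  also have "\<dots> \<le> (\<integral>\<^sup>+ z. Phi (u (fst z)) (u (snd z)) /
               ennreal (norm (fst z - snd z) powr (real DIM('a) + a)) \<partial>(lborel \<Otimes>\<^sub>M lborel))"
    by (intro nn_integral_mono T_le_Phi)
  finally show ?thesis unfolding A_def .
qed

lemma emeasure_superlevel_le:
  fixes u :: "'a::euclidean_space \<Rightarrow> real"
  assumes u: "prob_density u" and t: "t > 0"
  shows "emeasure lborel {x. t \<le> u x} \<le> ennreal (1/t)"
proof -
  have [measurable]: "u \<in> borel_measurable lborel" using u unfolding prob_density_def by simp
  have "ennreal t * emeasure lborel {x. t \<le> u x} = (\<integral>\<^sup>+ x. ennreal t * indicator {x. t \<le> u x} x \<partial>lborel)"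
    by (subst nn_integral_cmult_indicator) auto
  also have "\<dots> \<le> (\<integral>\<^sup>+ x. ennreal (u x) \<partial>lborel)"
    by (intro nn_integral_mono) (auto split: split_indicator intro: ennreal_leI)
  finally have "ennreal t * emeasure lborel {x. t \<le> u x} \<le> 1" using u by (simp add: prob_density_def)
  then have "ennreal (1/t) * (ennreal t * emeasure lborel {x. t \<le> u x}) \<le> ennreal (1/t)"
    using mult_left_mono[of _ 1 "ennreal (1/t)"] by simp
  then show ?thesis using t by (simp add: mult.assoc[symmetric] flip: ennreal_mult)
qed

lemma exists_power_four_le_less:
  fixes t :: real
  assumes "1 \<le> t"
  obtains m :: nat where "4^m \<le> t" "t < 4^Suc m"
proof -
  define m where "m = nat \<lfloor>log 4 t\<rfloor>"
  have "\<lfloor>log 4 t\<rfloor> = int m" unfolding m_def using assms by simp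
  then have "4 powr real m \<le> t \<and> t < 4 powr (real m + 1)"
    using assms floor_log_eq_powr_iff[of t 4 "int m"] by simp
  then show ?thesis using that by (simp add: powr_realpow powr_add mult.commute) blast
qed

text \<open>A pointwise layer-cake bound: values below \<open>l\<close> are controlled by \<open>l\<^sup>p\<^sup>-\<^sup>1 v\<close>, a value in
  \<open>[l 4\<^sup>m, l 4\<^sup>m\<^sup>+\<^sup>1)\<close> by the single term with \<open>k = m\<close>.\<close>

lemma powr_le_dyadic_layers:
  fixes v l p :: real
  assumes v: "v \<ge> 0" and l: "l > 0" and p: "p \<ge> 1"
  shows "ennreal (v powr p) \<le> ennreal (l powr (p-1) * v) +
     (\<Sum>k. ennreal (4 powr p * (l * 4^k) powr p) * indicator {k. l * 4^k \<le> v} k)"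
proof (cases "v < l")
  case True
  have "v powr p \<le> l powr (p-1) * v"
  proof (cases "v = 0")
    case False
    then have "v powr p = v powr (p-1) * v" using v by (simp add: powr_diff)
    also have "\<dots> \<le> l powr (p-1) * v" using v True p by (auto intro!: mult_right_mono powr_mono2)
    finally show ?thesis .
  qed simp
  then show ?thesis by (intro add_increasing2) (auto intro: ennreal_leI)
next
  case False
  then obtain m where m: "4^m \<le> v/l" "v/l < 4^Suc m"
    using l exists_power_four_le_less[of "v/l"] by auto
  then have m_l: "l * 4^m \<le> v" "v < 4 * (l * 4^m)" using l by (auto simp: field_simps)
  then have "v powr p \<le> 4 powr p * (l * 4^m) powr p"
    using v p l by (auto simp flip: powr_mult intro!: powr_mono2)
  then have "ennreal (v powr p) \<le> ennreal (4 powr p * (l * 4^m) powr p) * indicator {k. l * 4^k \<le> v} m"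
    using m_l by (simp add: ennreal_leI)
  also have "\<dots> \<le> (\<Sum>k. ennreal (4 powr p * (l * 4^k) powr p) * indicator {k. l * 4^k \<le> v} k)"
    using sum_le_suminf[OF summableI, of "{m}"] by simp
  finally show ?thesis by (intro add_increasing) auto
qed

lemma Lp_pow_le_superlevel_sum:
  fixes u :: "'a::euclidean_space \<Rightarrow> real"
  assumes u: "prob_density u" and l: "l > 0" and p: "p \<ge> 1"
  shows "Lp_pow p u \<le> ennreal (l powr (p-1))
     + (\<Sum>k. ennreal (4 powr p * (l * 4^k) powr p) * emeasure lborel {x. l * 4^k \<le> u x})"
proof -
  have [measurable]: "u \<in> borel_measurable lborel" and u_nonneg: "\<And>x. 0 \<le> u x"
    and u_int: "(\<integral>\<^sup>+ x. ennreal (u x) \<partial>lborel) = 1" using u unfolding prob_density_def by auto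
  have "Lp_pow p u \<le> (\<integral>\<^sup>+ x. ennreal (l powr (p-1)) * ennreal (u x)
      + (\<Sum>k. ennreal (4 powr p * (l * 4^k) powr p) * indicator {x. l * 4^k \<le> u x} x) \<partial>lborel)"
    unfolding Lp_pow_def using powr_le_dyadic_layers[OF u_nonneg l p] u_nonneg l
    by (intro nn_integral_mono) (simp add: ennreal_mult indicator_def)
  also have "\<dots> = ennreal (l powr (p-1)) * (\<integral>\<^sup>+ x. ennreal (u x) \<partial>lborel)
      + (\<Sum>k. \<integral>\<^sup>+ x. ennreal (4 powr p * (l * 4^k) powr p) * indicator {x. l * 4^k \<le> u x} x \<partial>lborel)"
    by (simp add: nn_integral_add nn_integral_cmult nn_integral_suminf)
  also have "\<dots> = ennreal (l powr (p-1))
      + (\<Sum>k. ennreal (4 powr p * (l * 4^k) powr p) * emeasure lborel {x. l * 4^k \<le> u x})"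
    using u_int by (simp add: nn_integral_cmult_indicator)
  finally show ?thesis .
qed

lemma superlevel_sum_le_fisher:
  fixes u :: "'a::euclidean_space \<Rightarrow> real"
  assumes u: "prob_density u" and fin: "frac_fisher a u < \<infinity>" and l: "l > 0" and a: "a > 0"
  defines "m \<equiv> \<lambda>k. measure lborel {x. l * 4^k \<le> u x}"
  shows "(\<Sum>k<n. l * 4^k * m (Suc k) * m k powr (-(a / DIM('a))))
     \<le> 2 * enn2real (frac_fisher a u) / ball_kernel_const DIM('a) a"
proof -
  define c where "c = ball_kernel_const DIM('a) a"
  define I where "I = enn2real (frac_fisher a u)"
  have c: "c > 0" unfolding c_def by (rule ball_kernel_const_pos) simp
  have u_meas: "u \<in> borel_measurable lborel" and u_nonneg: "\<And>x. 0 \<le> u x"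
    using u unfolding prob_density_def by auto
  have fin_levels: "emeasure lborel {x. l * 4^k \<le> u x} < \<infinity>" for k
    using emeasure_superlevel_le[OF u, of "l * 4^k"] l by (auto simp: le_less_trans)
  have "(\<integral>\<^sup>+ z. Phi (u (fst z)) (u (snd z)) /
               ennreal (norm (fst z - snd z) powr (real DIM('a) + a)) \<partial>(lborel \<Otimes>\<^sub>M lborel))
      = ennreal 2 * frac_fisher a u"
    unfolding frac_fisher_def mult.assoc[symmetric] by (subst ennreal_mult[symmetric]) auto
  also have "\<dots> = ennreal (2 * I)" unfolding I_def using fin by (simp add: ennreal_mult)
  finally have energy: "(\<integral>\<^sup>+ z. Phi (u (fst z)) (u (snd z)) /
      ennreal (norm (fst z - snd z) powr (real DIM('a) + a)) \<partial>(lborel \<Otimes>\<^sub>M lborel)) = ennreal (2 * I)" .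
  have "(\<Sum>k. ennreal (l * 4^k * (c * m k powr (-(a / DIM('a))) * m (Suc k)))) \<le> ennreal (2 * I)"
    using suminf_superlevel_energy_le[OF u_meas u_nonneg l a fin_levels] unfolding energy c_def m_def .
  then have "(\<Sum>k<n. ennreal (l * 4^k * (c * m k powr (-(a / DIM('a))) * m (Suc k)))) \<le> ennreal (2 * I)"
    by (rule order_trans[rotated]) (auto intro: sum_le_suminf)
  then have "(\<Sum>k<n. l * 4^k * (c * m k powr (-(a / DIM('a))) * m (Suc k))) \<le> 2 * I"
    using l c unfolding I_def m_def by (subst (asm) sum_ennreal) (auto simp: ennreal_le_iff)
  then show ?thesis
    using c unfolding c_def[symmetric] I_def[symmetric]
    by (simp add: sum_distrib_left mult_ac field_simps)
qed

lemma Lp_pow_le_fisher_at_scale: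
  fixes u :: "'a::euclidean_space \<Rightarrow> real"
  assumes a: "0 < a" "a < real DIM('a)" and p: "1 \<le> p" "p \<le> real DIM('a) / (real DIM('a) - a)"
    and u: "prob_density u" and fin: "frac_fisher a u < \<infinity>" and l: "l > 0"
  defines "r \<equiv> a / real DIM('a)" and "q \<equiv> real DIM('a) / (real DIM('a) - a)"
  shows "Lp_pow p u \<le> ennreal (l powr (p-1) + 4 powr p * l powr (p - q) *
     (2 * l powr r + 4 * absorption_const r / ball_kernel_const DIM('a) a * enn2real (frac_fisher a u)) powr q)"
proof -
  define m where "m k = measure lborel {x. l * 4^k \<le> u x}" for k
  define I where "I = enn2real (frac_fisher a u)"
  define S where "S = 2 * l powr r + 4 * absorption_const r / ball_kernel_const DIM('a) a * I"
  have r: "0 < r" "r < 1" unfolding r_def using a by auto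
  have qr: "q * (1 - r) = 1" unfolding q_def r_def using a by (simp add: field_simps)
  have levels_le: "emeasure lborel {x. l * 4^k \<le> u x} \<le> ennreal (1 / (l * 4^k))" for k
    using l by (intro emeasure_superlevel_le u) auto
  have levels_eq: "emeasure lborel {x. l * 4^k \<le> u x} = ennreal (m k)" for k
    using levels_le[of k] unfolding m_def by (intro emeasure_eq_ennreal_measure) (auto simp: top_unique)
  have m_nonneg: "m k \<ge> 0" for k unfolding m_def by simp
  have m_decr: "m (Suc k) \<le> m k" for k
  proof -
    have "emeasure lborel {x. l * 4^Suc k \<le> u x} \<le> emeasure lborel {x. l * 4^k \<le> u x}"
      using u l unfolding prob_density_def
      by (intro emeasure_mono) (auto intro: order_trans[rotated] simp: measurable_sets_borel)
    then show ?thesis unfolding levels_eq using m_nonneg by simp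
  qed
  have m0: "m 0 \<le> 1/l" using levels_le[of 0] l unfolding levels_eq by simp
  have "(\<Sum>k<n. l * 4^k * m (Suc k) * m k powr (-r)) \<le> 2 * I / ball_kernel_const DIM('a) a" for n
    using superlevel_sum_le_fisher[OF u fin l a(1)] unfolding m_def r_def I_def .
  from sum_dyadic_powr_le[OF r l m_nonneg m_decr m0 this]
  have "(\<Sum>k<n. l * 4^k * m k powr (1-r)) \<le> S" for n
    unfolding S_def by (simp add: field_simps)
  from sum_dyadic_moments_le[OF qr _ _ l m_nonneg this] p
  have moments: "(\<Sum>k<n. 4 powr p * (l * 4^k) powr p * m k) \<le> 4 powr p * l powr (p-q) * S powr q" for n
    unfolding q_def by simp
  have "Lp_pow p u \<le> ennreal (l powr (p-1)) + (\<Sum>k. ennreal (4 powr p * (l * 4^k) powr p * m k))"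
    using Lp_pow_le_superlevel_sum[OF u l p(1)] m_nonneg by (simp add: levels_eq ennreal_mult)
  moreover have "(\<Sum>k. ennreal (4 powr p * (l * 4^k) powr p * m k))
      \<le> ennreal (4 powr p * l powr (p-q) * S powr q)"
  proof (rule suminf_le_const[OF summableI])
    fix n
    show "(\<Sum>k<n. ennreal (4 powr p * (l * 4^k) powr p * m k)) \<le> ennreal (4 powr p * l powr (p-q) * S powr q)"
      using moments[of n] m_nonneg l by (subst sum_ennreal) (auto intro: ennreal_leI)
  qed
  ultimately have "Lp_pow p u \<le> ennreal (l powr (p-1)) + ennreal (4 powr p * l powr (p-q) * S powr q)"
    by (meson add_left_mono order_trans)
  then show ?thesis unfolding S_def I_def by (simp add: ennreal_plus)
qed

section \<open>Optimising the scale\<close>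

lemma ennreal_le_powr_of_bounds_above:
  fixes X :: ennreal and C e I :: real
  assumes C: "C > 0" and e: "e > 0" and I: "I \<ge> 0"
    and bound: "\<And>J. J > 0 \<Longrightarrow> I \<le> J \<Longrightarrow> X \<le> ennreal (C * J powr e)"
  shows "X \<le> ennreal (C * I powr e)"
proof (cases "I = 0")
  case True
  have small: "X \<le> 0 + ennreal \<epsilon>" if "\<epsilon> > 0" for \<epsilon>
  proof -
    define J where "J = (\<epsilon> / C) powr (1/e)"
    have J: "J > 0" unfolding J_def using that C by simp
    have "J powr e = \<epsilon> / C" unfolding J_def using e C that by (simp add: powr_powr)
    then have "C * J powr e = \<epsilon>" using C by simp
    then show ?thesis using bound[OF J] True J by simp
  qed
  have "X \<le> 0" by (rule ennreal_le_epsilon) (rule small)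
  then show ?thesis by simp
next
  case False
  then show ?thesis using bound[of I] I by simp
qed

text \<open>With \<open>l = J\<^sup>d\<^sup>/\<^sup>a\<close> every term of \<open>Lp_pow_le_fisher_at_scale\<close> becomes a multiple of
  \<open>J\<^sup>(\<^sup>p\<^sup>-\<^sup>1\<^sup>)\<^sup>d\<^sup>/\<^sup>a\<close>.\<close>

lemma Lp_pow_le_fisher_bound_powr:
  fixes u :: "'a::euclidean_space \<Rightarrow> real"
  assumes a: "0 < a" "a < real DIM('a)" and p: "1 \<le> p" "p \<le> real DIM('a) / (real DIM('a) - a)"
    and u: "prob_density u" "frac_fisher a u < \<infinity>" and J: "J > 0" "enn2real (frac_fisher a u) \<le> J"
  defines "r \<equiv> a / real DIM('a)" and "q \<equiv> real DIM('a) / (real DIM('a) - a)"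
    and "K \<equiv> 4 * absorption_const (a / real DIM('a)) / ball_kernel_const DIM('a) a"
  shows "Lp_pow p u \<le> ennreal ((1 + 4 powr p * (2 + K) powr q) * J powr ((p - 1) * real DIM('a) / a))"
proof -
  define e where "e = (p - 1) * real DIM('a) / a"
  define l where "l = J powr (1/r)"
  define I where "I = enn2real (frac_fisher a u)"
  have r: "r > 0" unfolding r_def using a by simp
  have K: "K > 0" unfolding K_def using absorption_const_pos ball_kernel_const_pos[of "DIM('a)" a] by simp
  have K_r: "K = 4 * absorption_const r / ball_kernel_const DIM('a) a" unfolding K_def r_def ..
  have q: "q \<ge> 1" unfolding q_def using a by auto
  have qr: "q * (1 - r) = 1" unfolding q_def r_def using a by (simp add: field_simps)
  have e1: "e = (p - 1) / r" unfolding e_def r_def using a by simp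
  have "(p - q) / r + q = (p - q * (1 - r)) / r" using r by (simp add: field_simps)
  then have e2: "e = (p - q) / r + q" unfolding e1 qr by simp
  have l: "l > 0" "l powr r = J" unfolding l_def using J r by (simp_all add: powr_powr)
  have I: "0 \<le> I" "I \<le> J" unfolding I_def using J by auto
  have "(2 * l powr r + K * I) powr q \<le> ((2 + K) * J) powr q"
    unfolding l(2) using I K q J by (intro powr_mono2) (auto simp: distrib_right)
  also have "\<dots> = (2 + K) powr q * J powr q" using K J by (simp add: powr_mult)
  finally have base: "(2 * l powr r + K * I) powr q \<le> (2 + K) powr q * J powr q" .
  have l_pow1: "l powr (p-1) = J powr e" unfolding l_def e1 by (simp add: powr_powr)
  have l_pow2: "l powr (p - q) * J powr q = J powr e"
    unfolding l_def e2 using J by (simp add: powr_powr powr_add)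
  have "l powr (p-1) + 4 powr p * l powr (p - q) * (2 * l powr r + K * I) powr q
      \<le> J powr e + 4 powr p * l powr (p - q) * ((2 + K) powr q * J powr q)"
    unfolding l_pow1 using base by (intro add_left_mono mult_left_mono) auto
  also have "\<dots> = J powr e + 4 powr p * (2 + K) powr q * (l powr (p - q) * J powr q)"
    by (simp only: mult_ac)
  also have "\<dots> = (1 + 4 powr p * (2 + K) powr q) * J powr e" unfolding l_pow2 by (simp add: algebra_simps)
  finally have "l powr (p-1) + 4 powr p * l powr (p - q) * (2 * l powr r + K * I) powr q
      \<le> (1 + 4 powr p * (2 + K) powr q) * J powr e" .
  moreover have "Lp_pow p u \<le> ennreal (l powr (p-1) + 4 powr p * l powr (p - q) * (2 * l powr r + K * I) powr q)"
    using Lp_pow_le_fisher_at_scale[OF a p u l(1)] unfolding K_r r_def q_def I_def .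
  ultimately show ?thesis unfolding e_def by (meson ennreal_leI order_trans)
qed

lemma Lp_pow_le_fisher_powr:
  assumes a: "0 < a" "a < real DIM('a::euclidean_space)"
    and p: "1 < p" "p \<le> real DIM('a) / (real DIM('a) - a)"
  obtains C where "C > 0"
    "\<And>u :: 'a \<Rightarrow> real. prob_density u \<Longrightarrow> frac_fisher a u < \<infinity> \<Longrightarrow>
       Lp_pow p u \<le> ennreal (C * enn2real (frac_fisher a u) powr ((p - 1) * real DIM('a) / a))"
proof -
  define K where "K = 4 * absorption_const (a / real DIM('a)) / ball_kernel_const DIM('a) a"
  define C where "C = 1 + 4 powr p * (2 + K) powr (real DIM('a) / (real DIM('a) - a))"
  have C: "C > 0" unfolding C_def by (simp add: add_pos_nonneg)
  have e: "(p - 1) * real DIM('a) / a > 0" using a p by simp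
  show ?thesis
  proof (rule that[OF C])
    fix u :: "'a \<Rightarrow> real"
    assume u: "prob_density u" "frac_fisher a u < \<infinity>"
    show "Lp_pow p u \<le> ennreal (C * enn2real (frac_fisher a u) powr ((p - 1) * real DIM('a) / a))"
      using Lp_pow_le_fisher_bound_powr[OF a less_imp_le[OF p(1)] p(2) u] unfolding C_def K_def
      by (intro ennreal_le_powr_of_bounds_above[OF _ e enn2real_nonneg]) (simp_all add: add_pos_nonneg)
  qed
qed

theorem lemma3p12:
  fixes a p :: real
  assumes "DIM('a::euclidean_space) \<ge> 2"
    and "0 < a" "a < 2"
    and "1 < p" "p \<le> real DIM('a) / (real DIM('a) - a)"
  shows "\<exists>C>0. \<forall>u :: 'a \<Rightarrow> real. prob_density u \<longrightarrow> frac_fisher a u < \<infinity> \<longrightarrow>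
           Lp_pow p u \<le> ennreal ((C * enn2real (frac_fisher a u)
              powr (1 - real DIM('a) / a * (1 / p - (real DIM('a) - a) / real DIM('a)))) powr p)"
proof -
  have a: "0 < a" "a < real DIM('a)" using assms by auto
  obtain C where C: "C > 0" and bound: "\<And>u :: 'a \<Rightarrow> real. prob_density u \<Longrightarrow> frac_fisher a u < \<infinity> \<Longrightarrow>
      Lp_pow p u \<le> ennreal (C * enn2real (frac_fisher a u) powr ((p - 1) * real DIM('a) / a))"
    using Lp_pow_le_fisher_powr[OF a assms(4,5)] by blast
  have exponent: "(1 - real DIM('a) / a * (1 / p - (real DIM('a) - a) / real DIM('a))) * p
      = (p - 1) * real DIM('a) / a"
    using assms by (simp add: field_simps)
  define \<theta> where "\<theta> = 1 - real DIM('a) / a * (1 / p - (real DIM('a) - a) / real DIM('a))"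
  have rescale: "(C powr (1/p) * I powr \<theta>) powr p = C * I powr ((p - 1) * real DIM('a) / a)"
    if "I \<ge> 0" for I :: real
  proof -
    have "(C powr (1/p) * I powr \<theta>) powr p = (C powr (1/p)) powr p * (I powr \<theta>) powr p"
      using C that by (simp add: powr_mult)
    also have "\<dots> = C * I powr (\<theta> * p)" using C assms(4) by (simp add: powr_powr)
    finally show ?thesis unfolding \<theta>_def exponent .
  qed
  show ?thesis
  proof (intro exI[of _ "C powr (1/p)"] conjI allI impI)
    show "C powr (1/p) > 0" using C by simp
    fix u :: "'a \<Rightarrow> real"
    assume "prob_density u" "frac_fisher a u < \<infinity>"
    then show "Lp_pow p u \<le> ennreal ((C powr (1/p) * enn2real (frac_fisher a u)
        powr (1 - real DIM('a) / a * (1 / p - (real DIM('a) - a) / real DIM('a)))) powr p)"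
      unfolding \<theta>_def[symmetric] rescale[OF enn2real_nonneg] by (rule bound)
  qed
qed

end
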